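(* For every Cauchy approximation $x:\mathcal{C}_{{\mathbf{R}_\mathbf{D}}}$ and every $u:{\mathbf{R}_\mathbf{D}}$, we have $\lim(x+u)=\lim(x)+u$, where $x+u$ denotes the Cauchy approximation $\lambda\varepsilon.\,x_\varepsilon+u$.
   Context: Work in univalent type theory with propositional truncation and function extensionality; $\Omega$ is the type of propositions, $\exists$ and $\vee$ are truncated. $\mathbf{Q}$ is the rationals, $\mathbf{Q}_+$ the positive rationals. For predicates $L,U:\mathbf{Q}\to\Omega$ and $x=(L,U)$ write $q<x$ for $L(q)$ and $x<r$ for $U(r)$. $x$ is a Dedekind cut if: (inhabited) $\exists q.\,q<x$ and $\exists r.\,x<r$; (rounded) $q<x\Leftrightarrow\exists q'.(q<q')\wedge(q'<x)$ and $x<r\Leftrightarrow\exists r'.(r'<r)\wedge(x<r')$; (transitive) $(q<x)\wedge(x<r)\Rightarrow q<r$; (located) $q<r\Rightarrow(q<x)\vee(x<r)$. ${\mathbf{R}_\mathbf{D}}$ is the type of Dedekind cuts. Define: $q<\mathsf{rat}(r):=q<r$, $\mathsf{rat}(q)<r:=q<r$; $q<x+y:=\exists s,t.(q=s+t)\wedge(s<x)\wedge(t<y)$, $x+y<r:=\exists s,t.(r=s+t)\wedge(x<s)\wedge(y<t)$; $q<-x:=x<-q$, $-x<r:=-r<x$; $x-y:=x+(-y)$; $q<|x|:=(q<x)\vee(q<-x)$, $|x|<r:=(x<r)\wedge(-x<r)$; premetric $x\sim_\varepsilon y:=|x-y|<\varepsilon$ (i.e. $\varepsilon$ lies in the upper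 cut of $|x-y|$). A Cauchy approximation in ${\mathbf{R}_\mathbf{D}}$ is $x:\mathbf{Q}_+\to{\mathbf{R}_\mathbf{D}}$ with $\forall\delta,\varepsilon.\,x_\delta\sim_{\delta+\varepsilon}x_\varepsilon$; $\mathcal{C}_{{\mathbf{R}_\mathbf{D}}}$ is their type. For $x:\mathcal{C}_{{\mathbf{R}_\mathbf{D}}}$, $\lim(x)$ is the Dedekind cut with $q<\lim(x):=\exists(\varepsilon,\theta:\mathbf{Q}_+).\,q+\varepsilon+\theta<x_\varepsilon$ and $\lim(x)<r:=\exists(\varepsilon,\theta:\mathbf{Q}_+).\,x_\varepsilon<r-\varepsilon-\theta$. *)

theory Defs
  imports Complex_Main
begin

text \<open>A candidate real number is a pair (L, U) of predicates on the rationals;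
  lower x q means q < x, upper x r means x < r.\<close>
type_synonym dcut = "(rat \<Rightarrow> bool) \<times> (rat \<Rightarrow> bool)"

definition lower :: "dcut \<Rightarrow> rat \<Rightarrow> bool" where "lower x q = fst x q"
definition upper :: "dcut \<Rightarrow> rat \<Rightarrow> bool" where "upper x r = snd x r"

definition is_dcut :: "dcut \<Rightarrow> bool" where
  "is_dcut x \<longleftrightarrow>
     (\<exists>q. lower x q) \<and> (\<exists>r. upper x r) \<and>
     (\<forall>q. lower x q \<longleftrightarrow> (\<exists>q'. q < q' \<and> lower x q')) \<and>
     (\<forall>r. upper x r \<longleftrightarrow> (\<exists>r'. r' < r \<and> upper x r')) \<and>
     (\<forall>q r. lower x q \<and> upper x r \<longrightarrow> q < r) \<and>
     (\<forall>q r. q < r \<longrightarrow> lower x q \<or> upper x r)"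

definition dcut_add :: "dcut \<Rightarrow> dcut \<Rightarrow> dcut" where
  "dcut_add x y =
     (\<lambda>q. \<exists>s t. q = s + t \<and> lower x s \<and> lower y t,
      \<lambda>r. \<exists>s t. r = s + t \<and> upper x s \<and> upper y t)"

definition dcut_neg :: "dcut \<Rightarrow> dcut" where
  "dcut_neg x = (\<lambda>q. upper x (- q), \<lambda>r. lower x (- r))"

definition dcut_abs :: "dcut \<Rightarrow> dcut" where
  "dcut_abs x = (\<lambda>q. lower x q \<or> lower (dcut_neg x) q,
                 \<lambda>r. upper x r \<and> upper (dcut_neg x) r)"

definition dcut_close :: "rat \<Rightarrow> dcut \<Rightarrow> dcut \<Rightarrow> bool" where
  "dcut_close eps x y \<longleftrightarrow> upper (dcut_abs (dcut_add x (dcut_neg y))) eps"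

text \<open>Cauchy approximations: maps from positive rationals to Dedekind cuts
  (values at non-positive arguments are irrelevant).\<close>
definition cauchy_approx :: "(rat \<Rightarrow> dcut) \<Rightarrow> bool" where
  "cauchy_approx x \<longleftrightarrow>
     (\<forall>e>0. is_dcut (x e)) \<and>
     (\<forall>d>0. \<forall>e>0. dcut_close (d + e) (x d) (x e))"

definition dcut_lim :: "(rat \<Rightarrow> dcut) \<Rightarrow> dcut" where
  "dcut_lim x =
     (\<lambda>q. \<exists>e>0. \<exists>th>0. lower (x e) (q + e + th),
      \<lambda>r. \<exists>e>0. \<exists>th>0. upper (x e) (r - e - th))"

end

theory Submission
  imports Defs
begin

text \<open>Both sides are defined cut-wise by existential formulas, and the identity is a mere
  reshuffling of witnesses: a lower witness s of x_\<epsilon> + u splits as s = s' + t with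
  t < u, and q + \<epsilon> + \<theta> = s' + t exactly when q - t + \<epsilon> + \<theta> = s'; dually for upper
  bounds. No property of Dedekind cuts or of Cauchy approximations is needed.\<close>

lemma dcut_eqI:
  assumes "\<And>q. lower x q \<longleftrightarrow> lower y q" and "\<And>r. upper x r \<longleftrightarrow> upper y r"
  shows "x = y"
  using assms by (simp add: lower_def upper_def prod_eq_iff fun_eq_iff)

lemma lower_dcut_add:
  "lower (dcut_add x y) q \<longleftrightarrow> (\<exists>s t. q = s + t \<and> lower x s \<and> lower y t)"
  by (simp add: dcut_add_def lower_def)

lemma upper_dcut_add:
  "upper (dcut_add x y) r \<longleftrightarrow> (\<exists>s t. r = s + t \<and> upper x s \<and> upper y t)"
  by (simp add: dcut_add_def upper_def)

lemma lower_dcut_lim: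
  "lower (dcut_lim x) q \<longleftrightarrow> (\<exists>e>0. \<exists>th>0. lower (x e) (q + e + th))"
  by (simp add: dcut_lim_def lower_def)

lemma upper_dcut_lim:
  "upper (dcut_lim x) r \<longleftrightarrow> (\<exists>e>0. \<exists>th>0. upper (x e) (r - e - th))"
  by (simp add: dcut_lim_def upper_def)

lemma lower_dcut_lim_add_const:
  "lower (dcut_lim (\<lambda>e. dcut_add (x e) u)) q \<longleftrightarrow> lower (dcut_add (dcut_lim x) u) q"
proof
  assume "lower (dcut_lim (\<lambda>e. dcut_add (x e) u)) q"
  then obtain e th s t where
    "e > 0" "th > 0" "q + e + th = s + t" "lower (x e) s" "lower u t"
    by (auto simp: lower_dcut_lim lower_dcut_add)
  moreover from \<open>q + e + th = s + t\<close> have "s = (q - t) + e + th"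
    by (simp add: algebra_simps)
  ultimately show "lower (dcut_add (dcut_lim x) u) q"
    unfolding lower_dcut_lim lower_dcut_add by (metis diff_add_cancel)
next
  assume "lower (dcut_add (dcut_lim x) u) q"
  then obtain e th s t where
    "e > 0" "th > 0" "q = s + t" "lower (x e) (s + e + th)" "lower u t"
    by (auto simp: lower_dcut_lim lower_dcut_add)
  moreover from \<open>q = s + t\<close> have "q + e + th = (s + e + th) + t"
    by simp
  ultimately show "lower (dcut_lim (\<lambda>e. dcut_add (x e) u)) q"
    unfolding lower_dcut_lim lower_dcut_add by blast
qed

lemma upper_dcut_lim_add_const:
  "upper (dcut_lim (\<lambda>e. dcut_add (x e) u)) r \<longleftrightarrow> upper (dcut_add (dcut_lim x) u) r"
proof
  assume "upper (dcut_lim (\<lambda>e. dcut_add (x e) u)) r"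
  then obtain e th s t where
    "e > 0" "th > 0" "r - e - th = s + t" "upper (x e) s" "upper u t"
    by (auto simp: upper_dcut_lim upper_dcut_add)
  moreover from \<open>r - e - th = s + t\<close> have "s = (r - t) - e - th"
    by (simp add: algebra_simps)
  ultimately show "upper (dcut_add (dcut_lim x) u) r"
    unfolding upper_dcut_lim upper_dcut_add by (metis diff_add_cancel)
next
  assume "upper (dcut_add (dcut_lim x) u) r"
  then obtain e th s t where
    "e > 0" "th > 0" "r = s + t" "upper (x e) (s - e - th)" "upper u t"
    by (auto simp: upper_dcut_lim upper_dcut_add)
  moreover from \<open>r = s + t\<close> have "r - e - th = (s - e - th) + t"
    by simp
  ultimately show "upper (dcut_lim (\<lambda>e. dcut_add (x e) u)) r"
    unfolding upper_dcut_lim upper_dcut_add by blast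
qed

theorem lemma2p24:
  fixes x :: "rat \<Rightarrow> dcut" and u :: dcut
  assumes "cauchy_approx x" and "is_dcut u"
  shows "dcut_lim (\<lambda>e. dcut_add (x e) u) = dcut_add (dcut_lim x) u"
  by (rule dcut_eqI) (simp_all only: lower_dcut_lim_add_const upper_dcut_lim_add_const)

end
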